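(* Let $\nu$ be an arbitrary complex number. The entire function $\mathbf{H}_\nu(\mathrm{e}^z)$ (for any branch of the Struve function $\mathbf{H}_\nu$) has infinite order of growth; in particular it is not subnormal.
   Context: The Struve function is $\mathbf{H}_\nu(\zeta)=(\zeta/2)^{\nu+1}\sum_{m\ge0}\frac{(-1)^m(\zeta^2/4)^m}{\Gamma(m+\frac32)\Gamma(\nu+m+\frac32)}$ (multivalued through $(\zeta/2)^{\nu+1}$); $\mathbf{H}_\nu(\mathrm{e}^z)$ is the entire function of $z$ obtained by analytic continuation along $\zeta=\mathrm{e}^z$. The order of an entire $f$ is $\limsup_{r\to\infty}\frac{\log\log M(r,f)}{\log r}$ and $f$ is subnormal if $\limsup_{r\to\infty}\frac{\log\log M(r,f)}{r}=0$, where $M(r,f)=\max_{|z|\le r}|f(z)|$. *)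

theory Defs
  imports "HOL-Analysis.Analysis"
begin

text \<open>Power series part of the Struve function, with zeta = exp z:
  sum over m of (-1)^m (zeta^2/4)^m / (Gamma(m+3/2) Gamma(nu+m+3/2)).\<close>
definition struve_series :: "complex \<Rightarrow> complex \<Rightarrow> complex" where
  "struve_series \<nu> z =
     (\<Sum>m. (-1)^m * (exp (2*z) / 4)^m * rGamma (of_nat m + 3/2) * rGamma (\<nu> + of_nat m + 3/2))"

text \<open>The branch k of H_nu(e^z): the multivalued factor (zeta/2)^(nu+1) along
  zeta = e^z is exp((nu+1)(z - ln 2 + 2 pi i k)) for some integer k.\<close>
definition struve_H_exp :: "complex \<Rightarrow> int \<Rightarrow> complex \<Rightarrow> complex" where
  "struve_H_exp \<nu> k z =
     exp ((\<nu> + 1) * (z - of_real (ln 2) + 2 * of_real pi * \<i> * of_int k)) * struve_series \<nu> z"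

definition max_modulus :: "(complex \<Rightarrow> complex) \<Rightarrow> real \<Rightarrow> real" where
  "max_modulus f r = Sup ((\<lambda>z. norm (f z)) ` cball 0 r)"

definition entire_order :: "(complex \<Rightarrow> complex) \<Rightarrow> ereal" where
  "entire_order f = Limsup at_top (\<lambda>r. ereal (ln (ln (max_modulus f r)) / ln r))"

definition subnormal :: "(complex \<Rightarrow> complex) \<Rightarrow> bool" where
  "subnormal f \<longleftrightarrow> Limsup at_top (\<lambda>r. ereal (ln (ln (max_modulus f r)) / r)) = 0"

end

theory Submission
  imports Defs "HOL-Complex_Analysis.Complex_Analysis" "HOL-Real_Asymp.Real_Asymp"
begin

text \<open>
  Write H_\<nu>(e^z) = (e^z/2)^(\<nu>+1) F(e^(2z)/4) with F(w) = \<Sum> (-1)^m a_m w^m and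
  a_m = 1/(\<Gamma>(m+3/2) \<Gamma>(\<nu>+m+3/2)). Since a_m / a_(m+1) = (m+3/2)(\<nu>+m+3/2), F is entire
  and |a_m| \<ge> \<delta> (m+L)^(-2m). Cauchy's inequality on the circle |w| = e^2 (m+L)^2 then gives a
  point of that circle where |F| \<ge> \<delta> e^(2m). Every such w equals e^(2z)/4 with
  |z| \<le> R = log (m+L) + O(1), and on |z| \<le> R the prefactor is at least e^(-O(R)). Hence
  log M(R) \<ge> c e^R along a sequence R \<rightarrow> \<infinity>, i.e. log log M(r) \<ge> r/2 for arbitrarily large r,
  which rules out both finite order and subnormality.
\<close>

lemma frequently_le_imp_le_Limsup:
  fixes f :: "'a \<Rightarrow> 'b :: complete_linorder"
  assumes "\<exists>\<^sub>F x in F. c \<le> f x"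
  shows "c \<le> Limsup F f"
proof (rule ccontr)
  assume "\<not> c \<le> Limsup F f"
  hence "\<forall>\<^sub>F x in F. f x < c" by (intro Limsup_lessD) simp
  with assms show False by (simp add: frequently_def not_le)
qed

lemma filterlim_eventually_imp_frequently:
  assumes "filterlim g G F" "F \<noteq> bot" "\<forall>\<^sub>F n in F. P (g n)"
  shows "\<exists>\<^sub>F x in G. P x"
proof -
  have "\<exists>\<^sub>F n in F. P (g n)" using assms(2,3) by (rule eventually_frequently)
  hence "\<exists>\<^sub>F x in filtermap g F. P x" by (simp add: frequently_filtermap)
  thus ?thesis using assms(1) unfolding filterlim_def frequently_def
    by (meson filter_leD)
qed

lemma norm_le_max_modulus:
  assumes "continuous_on (cball 0 R) f" "norm z \<le> R"
  shows "norm (f z) \<le> max_modulus f R"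
proof -
  have "compact ((\<lambda>z. norm (f z)) ` cball 0 R)"
    by (intro compact_continuous_image continuous_on_norm assms(1)) simp
  hence "bdd_above ((\<lambda>z. norm (f z)) ` cball 0 R)"
    by (intro bounded_imp_bdd_above compact_imp_bounded)
  thus ?thesis unfolding max_modulus_def using assms(2) by (intro cSUP_upper) auto
qed

lemma entire_order_eq_infinity_if_frequently_ge_linear:
  assumes "c > 0" "\<exists>\<^sub>F r in at_top. c * r \<le> ln (ln (max_modulus f r))"
  shows "entire_order f = \<infinity>"
proof -
  let ?L = "\<lambda>r. ln (ln (max_modulus f r))"
  have "ereal B \<le> entire_order f" for B
  proof -
    have large: "\<forall>\<^sub>F r in at_top. B \<le> c * r / ln r \<and> 1 < r"
      using assms(1) by (intro eventually_conj) real_asymp+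
    have "B \<le> ?L r / ln r" if "c * r \<le> ?L r \<and> B \<le> c * r / ln r \<and> 1 < r" for r
    proof -
      have "c * r / ln r \<le> ?L r / ln r" using that by (intro divide_right_mono) auto
      with that show ?thesis by linarith
    qed
    with frequently_eventually_frequently[OF assms(2) large]
    have "\<exists>\<^sub>F r in at_top. B \<le> ?L r / ln r"
      by (rule frequently_elim1)
    thus ?thesis unfolding entire_order_def
      by (intro frequently_le_imp_le_Limsup) simp
  qed
  thus ?thesis by (metis ereal_less_PInfty less_irrefl ereal_top)
qed

lemma not_subnormal_if_frequently_ge_linear:
  assumes "c > 0" "\<exists>\<^sub>F r in at_top. c * r \<le> ln (ln (max_modulus f r))"
  shows "\<not> subnormal f"
proof -
  have "\<exists>\<^sub>F r in at_top. c \<le> ln (ln (max_modulus f r)) / r"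
    using frequently_eventually_frequently[OF assms(2) eventually_gt_at_top[of 0]]
    by (rule frequently_elim1) (simp add: field_simps)
  hence "ereal c \<le> Limsup at_top (\<lambda>r. ereal (ln (ln (max_modulus f r)) / r))"
    by (intro frequently_le_imp_le_Limsup) simp
  thus ?thesis using assms(1) unfolding subnormal_def by (auto simp: zero_ereal_def)
qed

lemma fps_nth_Cauchy_bound:
  fixes f :: "complex fps"
  assumes "\<rho> > 0" "ereal \<rho> < fps_conv_radius f"
    and "\<And>w. norm w = \<rho> \<Longrightarrow> norm (eval_fps f w) \<le> B"
  shows "norm (fps_nth f m) * \<rho> ^ m \<le> B"
proof -
  have "cball 0 \<rho> \<subseteq> eball 0 (fps_conv_radius f)"
    using assms(2) by (auto simp: subset_eq intro!: le_less_trans[OF _ assms(2)])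
  hence "eval_fps f holomorphic_on ball 0 \<rho>" "continuous_on (cball 0 \<rho>) (eval_fps f)"
    by (auto intro!: holomorphic_on_eval_fps continuous_on_subset[OF continuous_on_eval_fps])
  hence "norm ((deriv ^^ m) (eval_fps f) 0) \<le> fact m * B / \<rho> ^ m"
    using assms(1,3) by (intro Cauchy_inequality) auto
  moreover have "fps_nth f m = (deriv ^^ m) (eval_fps f) 0 / fact m"
    using assms(1) by (intro fps_nth_conv_deriv order.strict_trans[OF _ assms(2)]) simp
  hence "(deriv ^^ m) (eval_fps f) 0 = fact m * fps_nth f m" by simp
  ultimately have "fact m * norm (fps_nth f m) \<le> fact m * (B / \<rho> ^ m)"
    by (simp add: norm_mult)
  hence "norm (fps_nth f m) \<le> B / \<rho> ^ m"
    by (subst (asm) mult_le_cancel_left_pos) auto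
  thus ?thesis using assms(1) by (simp add: field_simps)
qed

lemma exp_double_preimage_bounded:
  fixes w :: complex
  assumes "w \<noteq> 0"
  obtains z where "exp (2 * z) = w" "norm z \<le> \<bar>ln (norm w)\<bar> / 2 + pi / 2"
proof
  show "exp (2 * (Ln w / 2)) = w" using assms by simp
  have "\<bar>Im (Ln w)\<bar> \<le> pi" using Im_Ln_le_pi[OF assms] mpi_less_Im_Ln[OF assms] by simp
  thus "norm (Ln w / 2) \<le> \<bar>ln (norm w)\<bar> / 2 + pi / 2"
    using cmod_le[of "Ln w / 2"] assms by simp
qed

definition struve_coeff :: "complex \<Rightarrow> nat \<Rightarrow> complex" where
  "struve_coeff \<nu> m = rGamma (of_nat m + 3/2) * rGamma (\<nu> + of_nat m + 3/2)"

definition struve_fps :: "complex \<Rightarrow> complex fps" where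
  "struve_fps \<nu> = Abs_fps (\<lambda>m. (-1)^m * struve_coeff \<nu> m)"

lemma struve_series_eq_eval_fps:
  "struve_series \<nu> z = eval_fps (struve_fps \<nu>) (exp (2 * z) / 4)"
  unfolding struve_series_def eval_fps_def struve_fps_def struve_coeff_def by (simp add: mult_ac)

lemma struve_coeff_recurrence:
  "struve_coeff \<nu> m = (of_nat m + 3/2) * (\<nu> + of_nat m + 3/2) * struve_coeff \<nu> (Suc m)"
proof -
  have "rGamma (of_nat m + 3/2 :: complex) = (of_nat m + 3/2) * rGamma (of_nat (Suc m) + 3/2)"
    using rGamma_plus1[of "of_nat m + 3/2 :: complex"] by (simp add: add_ac)
  moreover have "rGamma (\<nu> + of_nat m + 3/2) = (\<nu> + of_nat m + 3/2) * rGamma (\<nu> + of_nat (Suc m) + 3/2)"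
    using rGamma_plus1[of "\<nu> + of_nat m + 3/2"] by (simp add: add_ac)
  ultimately show ?thesis unfolding struve_coeff_def by (simp add: mult_ac)
qed

lemma norm_of_nat_add_three_halves: "norm (of_nat n + 3/2 :: complex) = real n + 3/2"
proof -
  have "(of_nat n + 3/2 :: complex) = of_real (real n + 3/2)" by simp
  also have "norm \<dots> = real n + 3/2" by (simp only: norm_of_real)
  finally show ?thesis .
qed

lemma struve_coeff_nonzero:
  assumes "norm \<nu> \<le> real m"
  shows "struve_coeff \<nu> m \<noteq> 0"
proof -
  have Re_pos_not_pole: "rGamma z \<noteq> 0" if "Re z > 0" for z :: complex
    using that by (auto simp: rGamma_eq_zero_iff elim!: nonpos_Ints_cases)
  have "- norm \<nu> \<le> Re \<nu>" using abs_Re_le_cmod[of \<nu>] by linarith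
  with assms show ?thesis
    unfolding struve_coeff_def by (auto intro!: Re_pos_not_pole)
qed

lemma fps_conv_radius_struve_fps: "fps_conv_radius (struve_fps \<nu>) = \<infinity>"
  unfolding fps_conv_radius_def struve_fps_def fps_nth_Abs_fps
proof (rule conv_radius_ratio_limit_ereal)
  show "\<forall>\<^sub>F m in sequentially. (-1)^m * struve_coeff \<nu> m \<noteq> 0"
    using eventually_ge_at_top[of "nat \<lceil>norm \<nu>\<rceil>"]
    by eventually_elim (auto intro!: struve_coeff_nonzero)
  show "(\<lambda>m. ereal (norm ((-1)^m * struve_coeff \<nu> m) / norm ((-1)^Suc m * struve_coeff \<nu> (Suc m))))
          \<longlonglongrightarrow> \<infinity>"
    unfolding tendsto_PInfty
  proof
    fix r :: real
    show "\<forall>\<^sub>F m in sequentially. ereal r < ereal (norm ((-1)^m * struve_coeff \<nu> m)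
            / norm ((-1)^Suc m * struve_coeff \<nu> (Suc m)))"
      using eventually_ge_at_top[of "nat \<lceil>norm \<nu> + \<bar>r\<bar> + 1\<rceil>"]
    proof eventually_elim
      case (elim m)
      have "struve_coeff \<nu> (Suc m) \<noteq> 0" using elim by (intro struve_coeff_nonzero) linarith
      hence ratio: "norm ((-1)^m * struve_coeff \<nu> m) / norm ((-1)^Suc m * struve_coeff \<nu> (Suc m))
           = (real m + 3/2) * norm (\<nu> + of_nat m + 3/2)"
        by (subst struve_coeff_recurrence)
           (simp add: norm_mult norm_power norm_of_nat_add_three_halves)
      have "real m + 3/2 \<le> norm (\<nu> + of_nat m + 3/2) + norm \<nu>"
        using norm_triangle_ineq4[of "\<nu> + of_nat m + 3/2" \<nu>]
        by (simp add: norm_of_nat_add_three_halves algebra_simps)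
      moreover have "real m \<ge> norm \<nu> + \<bar>r\<bar> + 1" using elim by linarith
      ultimately have "r < norm (\<nu> + of_nat m + 3/2)" by linarith
      also have "\<dots> \<le> (real m + 3/2) * norm (\<nu> + of_nat m + 3/2)"
        by (simp add: mult_le_cancel_right1)
      finally show ?case using ratio by simp
    qed
  qed
qed

lemma struve_coeff_lower_bound:
  obtains \<delta> L m0 where "\<delta> > 0" "L \<ge> 1"
    "\<And>m. m \<ge> m0 \<Longrightarrow> \<delta> \<le> norm (struve_coeff \<nu> m) * (real m + L) ^ (2 * m)"
proof
  define m0 where "m0 = nat \<lceil>norm \<nu>\<rceil>"
  define L where "L = norm \<nu> + 2"
  show "norm (struve_coeff \<nu> m0) > 0"
    using struve_coeff_nonzero[of \<nu> m0] unfolding m0_def by simp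
  show "L \<ge> 1" unfolding L_def by simp
  show "norm (struve_coeff \<nu> m0) \<le> norm (struve_coeff \<nu> m) * (real m + L) ^ (2 * m)"
    if "m \<ge> m0" for m
    using that
  proof (induction m rule: dec_induct)
    case base
    have "1 \<le> (real m0 + L) ^ (2 * m0)" unfolding L_def by (intro one_le_power) simp
    thus ?case by (simp add: mult_le_cancel_left1)
  next
    case (step n)
    let ?s = "real (Suc n) + L"
    have "norm (of_nat n + 3/2 :: complex) \<le> ?s" "norm (\<nu> + (of_nat n + 3/2)) \<le> ?s"
      using norm_triangle_ineq[of \<nu> "of_nat n + 3/2"]
      by (simp_all add: norm_of_nat_add_three_halves L_def)
    hence "norm (struve_coeff \<nu> n) \<le> ?s * ?s * norm (struve_coeff \<nu> (Suc n))"
      unfolding struve_coeff_recurrence[of \<nu> n] norm_mult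
      by (intro mult_right_mono mult_mono) (auto simp: add.assoc L_def)
    moreover have "(real n + L) ^ (2 * n) \<le> ?s ^ (2 * n)"
      unfolding L_def by (intro power_mono) auto
    ultimately have "norm (struve_coeff \<nu> n) * (real n + L) ^ (2 * n)
        \<le> (?s * ?s * norm (struve_coeff \<nu> (Suc n))) * ?s ^ (2 * n)"
      by (intro mult_mono) auto
    also have "\<dots> = norm (struve_coeff \<nu> (Suc n)) * ?s ^ (2 * Suc n)"
      by (simp add: mult_ac)
    finally show ?case using step.IH by linarith
  qed
qed

lemma continuous_on_struve_H_exp: "continuous_on A (struve_H_exp \<nu> k)"
  unfolding struve_H_exp_def[abs_def] struve_series_eq_eval_fps
  by (auto intro!: continuous_intros simp: fps_conv_radius_struve_fps)

text \<open>Each w with |w| = \<rho> is e^(2z)/4 for some |z| \<le> R, and the exponential factor on the right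
  bounds the reciprocal of the prefactor (e^z/2)^(\<nu>+1) on |z| \<le> R.\<close>
lemma struve_coeff_le_max_modulus:
  assumes "\<rho> \<ge> 1/4"
  defines "R \<equiv> ln (4 * \<rho>) / 2 + pi / 2"
  shows "norm (struve_coeff \<nu> m) * \<rho> ^ m
           \<le> max_modulus (struve_H_exp \<nu> k) R
               * exp (norm (\<nu> + 1) * (R + ln 2 + 2 * pi * \<bar>real_of_int k\<bar>))"
proof -
  have "norm (eval_fps (struve_fps \<nu>) w)
          \<le> max_modulus (struve_H_exp \<nu> k) R
              * exp (norm (\<nu> + 1) * (R + ln 2 + 2 * pi * \<bar>real_of_int k\<bar>))"
    if w: "norm w = \<rho>" for w
  proof -
    have "4 * w \<noteq> 0" using w assms(1) by auto
    then obtain z where z: "exp (2 * z) = 4 * w" "norm z \<le> \<bar>ln (norm (4 * w))\<bar> / 2 + pi / 2"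
      by (rule exp_double_preimage_bounded)
    have "ln (norm (4 * w)) = ln (4 * \<rho>)" by (simp add: norm_mult w)
    moreover have "ln (4 * \<rho>) \<ge> 0" using assms(1) by simp
    ultimately have "norm z \<le> R" using z(2) by (simp add: R_def)
    define u where "u = (\<nu> + 1) * (z - of_real (ln 2) + 2 * of_real pi * \<i> * of_int k)"
    have "- Re u \<le> norm u" using abs_Re_le_cmod[of u] by linarith
    also have "norm u \<le> norm (\<nu> + 1) * (R + ln 2 + 2 * pi * \<bar>real_of_int k\<bar>)"
      unfolding u_def norm_mult
    proof (intro mult_left_mono)
      show "norm (z - of_real (ln 2) + 2 * of_real pi * \<i> * of_int k)
              \<le> R + ln 2 + 2 * pi * \<bar>real_of_int k\<bar>"
        using norm_triangle_ineq4[of z "of_real (ln 2)"] \<open>norm z \<le> R\<close>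
          norm_triangle_ineq[of "z - of_real (ln 2)" "2 * of_real pi * \<i> * of_int k"]
        by (simp add: norm_mult)
    qed simp
    finally have prefactor: "exp (- Re u) \<le> exp (norm (\<nu> + 1) * (R + ln 2 + 2 * pi * \<bar>real_of_int k\<bar>))"
      by simp
    have "struve_H_exp \<nu> k z = exp u * eval_fps (struve_fps \<nu>) w"
      unfolding struve_H_exp_def struve_series_eq_eval_fps z(1) u_def by simp
    hence "norm (eval_fps (struve_fps \<nu>) w) = norm (struve_H_exp \<nu> k z) * exp (- Re u)"
      by (simp add: norm_mult exp_minus field_simps)
    also have "\<dots> \<le> max_modulus (struve_H_exp \<nu> k) R
                     * exp (norm (\<nu> + 1) * (R + ln 2 + 2 * pi * \<bar>real_of_int k\<bar>))"
      using norm_le_max_modulus[OF continuous_on_struve_H_exp \<open>norm z \<le> R\<close>, of \<nu> k]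
      by (intro mult_mono prefactor) (auto intro: order_trans[OF norm_ge_zero])
    finally show ?thesis .
  qed
  hence "norm (fps_nth (struve_fps \<nu>) m) * \<rho> ^ m
           \<le> max_modulus (struve_H_exp \<nu> k) R
               * exp (norm (\<nu> + 1) * (R + ln 2 + 2 * pi * \<bar>real_of_int k\<bar>))"
    using assms(1) by (intro fps_nth_Cauchy_bound) (auto simp: fps_conv_radius_struve_fps)
  thus ?thesis by (simp add: struve_fps_def norm_mult norm_power)
qed

lemma frequently_ln_ln_max_modulus_struve_ge:
  "\<exists>\<^sub>F r in at_top. r / 2 \<le> ln (ln (max_modulus (struve_H_exp \<nu> k) r))"
proof -
  obtain \<delta> L m0 where \<delta>: "\<delta> > 0" and L: "L \<ge> 1"
    and coeff: "\<And>m. m \<ge> m0 \<Longrightarrow> \<delta> \<le> norm (struve_coeff \<nu> m) * (real m + L) ^ (2 * m)"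
    using struve_coeff_lower_bound by blast
  define A where "A = norm (\<nu> + 1)"
  define D where "D = ln 2 + 2 * pi * \<bar>real_of_int k\<bar>"
  define \<rho> where "\<rho> = (\<lambda>m::nat. exp 2 * (real m + L) ^ 2)"
  define R where "R = (\<lambda>m. ln (4 * \<rho> m) / 2 + pi / 2)"
  define M where "M = max_modulus (struve_H_exp \<nu> k)"
  have "filterlim R at_top sequentially"
    unfolding R_def \<rho>_def by real_asymp
  moreover have "\<forall>\<^sub>F m in sequentially. exp (R m / 2) \<le> ln \<delta> + 2 * real m - A * (R m + D)"
    unfolding R_def \<rho>_def by real_asymp
  hence "\<forall>\<^sub>F m in sequentially. R m / 2 \<le> ln (ln (M (R m)))"
    using eventually_ge_at_top[of m0]
  proof eventually_elim
    case (elim m)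
    have "1 * 1 \<le> exp 2 * (real m + L) ^ 2"
      using L by (intro mult_mono one_le_power) simp_all
    hence "\<rho> m \<ge> 1/4" by (simp add: \<rho>_def)
    have "\<delta> * exp (2 * real m) \<le> norm (struve_coeff \<nu> m) * (real m + L) ^ (2 * m) * exp (2 * real m)"
      using coeff[OF elim(2)] by simp
    also have "\<dots> = norm (struve_coeff \<nu> m) * \<rho> m ^ m"
      by (simp add: \<rho>_def power_mult_distrib power_mult[symmetric] exp_of_nat_mult[symmetric] mult_ac)
    also have "\<dots> \<le> M (R m) * exp (A * (R m + D))"
      using struve_coeff_le_max_modulus[OF \<open>\<rho> m \<ge> 1/4\<close>]
      by (simp add: M_def R_def A_def D_def add.assoc)
    finally have M_ge: "exp (ln \<delta> + 2 * real m - A * (R m + D)) \<le> M (R m)"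
      using \<delta> by (simp add: exp_add exp_diff divide_le_eq)
    hence "ln \<delta> + 2 * real m - A * (R m + D) \<le> ln (M (R m))"
      by (simp add: ln_ge_iff less_le_trans[OF exp_gt_zero M_ge])
    hence "exp (R m / 2) \<le> ln (M (R m))" using elim(1) by linarith
    thus ?case by (subst ln_ge_iff) (auto intro: less_le_trans[OF exp_gt_zero])
  qed
  ultimately show ?thesis unfolding M_def
    by (intro filterlim_eventually_imp_frequently[of R]) auto
qed

theorem corollary5p1:
  fixes \<nu> :: complex and k :: int
  shows "entire_order (struve_H_exp \<nu> k) = \<infinity> \<and> \<not> subnormal (struve_H_exp \<nu> k)"
proof -
  have "\<exists>\<^sub>F r in at_top. 1 / 2 * r \<le> ln (ln (max_modulus (struve_H_exp \<nu> k) r))"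
    using frequently_ln_ln_max_modulus_struve_ge by simp
  moreover have "(1 / 2 :: real) > 0" by simp
  ultimately show ?thesis
    using entire_order_eq_infinity_if_frequently_ge_linear not_subnormal_if_frequently_ge_linear
    by blast
qed

end
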